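(* Assume the standing hypotheses of the context. Let $u$ be an extremal, i.e. an admissible function satisfying the regularity hypotheses (R) and, for each $k=1,\dots,N$ and all $t\in\Delta_n$, the Euler–Lagrange equations $$\sum_{i=1}^n\Big[-A^{\alpha_i}_{P^{1*}_{t_i}}\big(\partial_{v_{k,i}}F\{u\}\big)(t)+K^{\beta_i}_{P^{2*}_{t_i}}\big(\partial_{w_{k,i}}F\{u\}\big)(t)\Big]+\partial_{x_k}F\{u\}(t)=0.$$ Let $\xi$, $\hat\xi(t)=\xi(t,u(t))$ and the family $\bar u_\varepsilon=u+\varepsilon\hat\xi+r_\varepsilon$ be as in the context, and suppose $\mathcal{J}$ is invariant along this family, i.e. for every $\varepsilon$ near $0$ and every subrectangle $\Delta_n^*\subseteq\Delta_n$, $\int_{\Delta_n^*}F\{u\}\,dt=\int_{\Delta_n^*}F\{\bar u_\varepsilon\}\,dt$. Then for all $t\in\Delta_n$, $$\sum_{k=1}^N\sum_{i=1}^n\Big[\mathrm{D}^{\alpha_i}_{P^1_{t_i}}\big[\hat\xi_k,\partial_{v_{k,i}}F\{u\}\big](t)+\mathrm{I}^{\beta_i}_{P^2_{t_i}}\big[\hat\xi_k,\partial_{w_{k,i}}F\{u\}\big](t)\Big]=0.$$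
   Context: Fix $n,N\in\mathbb{N}$, real numbers $a_i<b_i$, $\Delta_n=(a_1,b_1)\times\cdots\times(a_n,b_n)$ with closure $\bar\Delta_n$, $t=(t_1,\dots,t_n)$, $dt=dt_n\cdots dt_1$. For each order $\gamma\in(0,1)$ a kernel $k_\gamma$ is given, a difference kernel: $k_\gamma(s,\tau)=k_\gamma(s-\tau)$. A parameter set is $P_{t_i}=\langle a_i,t_i,b_i,p_i,q_i\rangle$ ($p_i,q_i\in\mathbb{R}$), with dual $P^*_{t_i}=\langle a_i,t_i,b_i,q_i,p_i\rangle$. For $f:\bar\Delta_n\to\mathbb{R}$: $K^{\gamma}_{P_{t_i}}f(t)=p_i\int_{a_i}^{t_i}k_\gamma(t_i-\tau)f(t_1,\dots,\tau,\dots,t_n)d\tau+q_i\int_{t_i}^{b_i}k_\gamma(\tau-t_i)f(t_1,\dots,\tau,\dots,t_n)d\tau$ ($\tau$ in the $i$-th slot); $A^{\alpha}_{P_{t_i}}f=\frac{\partial}{\partial t_i}K^{1-\alpha}_{P_{t_i}}f$; $B^{\alpha}_{P_{t_i}}f=K^{1-\alpha}_{P_{t_i}}\frac{\partial f}{\partial t_i}$; componentwise on vector functions. Standing data: $\boldsymbol\alpha,\boldsymbol\beta\in(0,1)^n$; $P^j=(P^j_{t_1},\dots,P^j_{t_n})$, $P^j_{t_i}=\langle a_i,t_i,b_i,p^j_i,q^j_i\rangle$, $j=1,2$; $k_{1-\alpha_i},k_{\beta_i}\in L_1((0,b_i-a_i);\mathbb{R})$. $\nabla^{\boldsymbol\alpha}_{B_{P^1}}u$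 is the $N\times n$ array with entries $B^{\alpha_i}_{P^1_{t_i}}u_k$, $\nabla^{\boldsymbol\beta}_{K_{P^2}}u$ the array with entries $K^{\beta_i}_{P^2_{t_i}}u_k$. $F(t,x,v,w)$ ($t\in\bar\Delta_n$, $x\in\mathbb{R}^N$, $v=(v_{k,i}),w=(w_{k,i})\in\mathbb{R}^{N\times n}$) is $C^2$ with partial derivatives $\partial_{x_k}F,\partial_{v_{k,i}}F,\partial_{w_{k,i}}F$; $F\{u\}(t)$ denotes evaluation at $(t,u(t),\nabla^{\boldsymbol\alpha}_{B_{P^1}}u(t),\nabla^{\boldsymbol\beta}_{K_{P^2}}u(t))$; $\mathcal{J}[u]=\int_{\Delta_n}F\{u\}\,dt$. Admissible: $u\in C^1(\bar\Delta_n;\mathbb{R}^N)$ with all $B^{\alpha_i}_{P^1_{t_i}}u$, $K^{\beta_i}_{P^2_{t_i}}u$ continuous on $\bar\Delta_n$ and $u=\psi$ on $\partial\Delta_n$ for a given $\psi$. (R): for all $i,k$, $K^{1-\alpha_i}_{P^{1*}_{t_i}}(\partial_{v_{k,i}}F\{u\})\in C^1(\bar\Delta_n)$ and $K^{\beta_i}_{P^{2*}_{t_i}}(\partial_{w_{k,i}}F\{u\})$ is continuous on $\bar\Delta_n$. Transformations: $\xi$ is $C^1$, $\hat\xi(t)=\xi(t,u(t))\in C^1(\bar\Delta_n;\mathbb{R}^N)$ with continuous $B^{\alpha_i}_{P^1_{t_i}}\hat\xi$, $K^{\beta_i}_{P^2_{t_i}}\hat\xi$; $r_\varepsilon\in C^1(\bar\Delta_n;\mathbb{R}^N)$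 with continuous $B^{\alpha_i}_{P^1_{t_i}}r_\varepsilon$, $K^{\beta_i}_{P^2_{t_i}}r_\varepsilon$, and $r_\varepsilon$, $B^{\alpha_i}_{P^1_{t_i}}r_\varepsilon$, $K^{\beta_i}_{P^2_{t_i}}r_\varepsilon$ are $o(\varepsilon)$ pointwise. Bilinear operators: for $f,g$ with the required operators defined, $\mathrm{D}^{\alpha_i}_{P^1_{t_i}}[f,g]=f\,A^{\alpha_i}_{P^{1*}_{t_i}}g+g\,B^{\alpha_i}_{P^1_{t_i}}f$ and $\mathrm{I}^{\beta_i}_{P^2_{t_i}}[f,g]=-f\,K^{\beta_i}_{P^{2*}_{t_i}}g+g\,K^{\beta_i}_{P^2_{t_i}}f$. *)

theory Defs
  imports "HOL-Analysis.Analysis"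
begin

text \<open>Points of the closed box are vectors t :: real^'n (the index type 'n plays the
role of {1..n}); values of admissible functions are vectors in real^'m ('m = {1..N}).
Arrays v = (v_{k,i}) are of type real^'n^'m, entry (k,i) being v$k$i.
The kernel family is a function kern :: real => real => real, kern gamma s = k_gamma(s)
(difference kernel).\<close>

definition upd :: "'a^'i \<Rightarrow> 'i \<Rightarrow> 'a \<Rightarrow> 'a^'i" where
  "upd t i s = (\<chi> j. if j = i then s else t $ j)"

definition upd2 :: "'a^'i^'k \<Rightarrow> 'k \<Rightarrow> 'i \<Rightarrow> 'a \<Rightarrow> 'a^'i^'k" where
  "upd2 v k i s = upd v k (upd (v $ k) i s)"

definition partial :: "real^'n \<Rightarrow> real^'n \<Rightarrow> 'n \<Rightarrow> (real^'n \<Rightarrow> 'b::real_normed_vector)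
    \<Rightarrow> real^'n \<Rightarrow> 'b" where
  "partial a b i g t = vector_derivative (\<lambda>s. g (upd t i s)) (at (t $ i) within {a $ i .. b $ i})"

definition C1_box :: "real^'n \<Rightarrow> real^'n \<Rightarrow> (real^'n \<Rightarrow> 'b::real_normed_vector) \<Rightarrow> bool" where
  "C1_box a b g \<longleftrightarrow> continuous_on (cbox a b) g \<and>
     (\<forall>i. \<forall>t\<in>cbox a b. ((\<lambda>s. g (upd t i s)) has_vector_derivative partial a b i g t)
            (at (t $ i) within {a $ i .. b $ i})) \<and>
     (\<forall>i. continuous_on (cbox a b) (partial a b i g))"

definition Kop :: "(real \<Rightarrow> real \<Rightarrow> real) \<Rightarrow> real \<Rightarrow> real^'n \<Rightarrow> real^'n \<Rightarrow> real \<Rightarrow> real \<Rightarrow> 'n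
    \<Rightarrow> (real^'n \<Rightarrow> real) \<Rightarrow> real^'n \<Rightarrow> real" where
  "Kop kern \<gamma> a b p q i f t =
     p * (LINT \<tau>:{a $ i .. t $ i}|lborel. kern \<gamma> (t $ i - \<tau>) * f (upd t i \<tau>)) +
     q * (LINT \<tau>:{t $ i .. b $ i}|lborel. kern \<gamma> (\<tau> - t $ i) * f (upd t i \<tau>))"

definition Aop :: "(real \<Rightarrow> real \<Rightarrow> real) \<Rightarrow> real \<Rightarrow> real^'n \<Rightarrow> real^'n \<Rightarrow> real \<Rightarrow> real \<Rightarrow> 'n
    \<Rightarrow> (real^'n \<Rightarrow> real) \<Rightarrow> real^'n \<Rightarrow> real" where
  "Aop kern \<alpha> a b p q i f = partial a b i (Kop kern (1 - \<alpha>) a b p q i f)"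

definition Bop :: "(real \<Rightarrow> real \<Rightarrow> real) \<Rightarrow> real \<Rightarrow> real^'n \<Rightarrow> real^'n \<Rightarrow> real \<Rightarrow> real \<Rightarrow> 'n
    \<Rightarrow> (real^'n \<Rightarrow> real) \<Rightarrow> real^'n \<Rightarrow> real" where
  "Bop kern \<alpha> a b p q i f = Kop kern (1 - \<alpha>) a b p q i (partial a b i f)"

text \<open>The arrays nabla^alpha_{B_{P^1}} u and nabla^beta_{K_{P^2}} u (P^j given by the
vectors p, q of coefficients p^j_i, q^j_i).\<close>
definition gradB :: "(real \<Rightarrow> real \<Rightarrow> real) \<Rightarrow> real^'n \<Rightarrow> real^'n \<Rightarrow> real^'n \<Rightarrow> real^'n \<Rightarrow> real^'n
    \<Rightarrow> (real^'n \<Rightarrow> real^'m) \<Rightarrow> real^'n \<Rightarrow> real^'n^'m" where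
  "gradB kern \<alpha> a b p q u t = (\<chi> k. \<chi> i. Bop kern (\<alpha> $ i) a b (p $ i) (q $ i) i (\<lambda>s. u s $ k) t)"

definition gradK :: "(real \<Rightarrow> real \<Rightarrow> real) \<Rightarrow> real^'n \<Rightarrow> real^'n \<Rightarrow> real^'n \<Rightarrow> real^'n \<Rightarrow> real^'n
    \<Rightarrow> (real^'n \<Rightarrow> real^'m) \<Rightarrow> real^'n \<Rightarrow> real^'n^'m" where
  "gradK kern \<beta> a b p q u t = (\<chi> k. \<chi> i. Kop kern (\<beta> $ i) a b (p $ i) (q $ i) i (\<lambda>s. u s $ k) t)"

definition Feval :: "(real^'n \<Rightarrow> real^'m \<Rightarrow> real^'n^'m \<Rightarrow> real^'n^'m \<Rightarrow> real)
    \<Rightarrow> (real \<Rightarrow> real \<Rightarrow> real) \<Rightarrow> real^'n \<Rightarrow> real^'n \<Rightarrow> real^'n \<Rightarrow> real^'n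
    \<Rightarrow> real^'n \<Rightarrow> real^'n \<Rightarrow> real^'n \<Rightarrow> real^'n
    \<Rightarrow> (real^'n \<Rightarrow> real^'m) \<Rightarrow> real^'n \<Rightarrow> real" where
  "Feval G kern \<alpha> \<beta> a b p1 q1 p2 q2 u t =
     G t (u t) (gradB kern \<alpha> a b p1 q1 u t) (gradK kern \<beta> a b p2 q2 u t)"

definition dFx :: "(real^'n \<Rightarrow> real^'m \<Rightarrow> real^'n^'m \<Rightarrow> real^'n^'m \<Rightarrow> real) \<Rightarrow> 'm
    \<Rightarrow> real^'n \<Rightarrow> real^'m \<Rightarrow> real^'n^'m \<Rightarrow> real^'n^'m \<Rightarrow> real" where
  "dFx F k t x v w = deriv (\<lambda>s. F t (upd x k s) v w) (x $ k)"

definition dFv :: "(real^'n \<Rightarrow> real^'m \<Rightarrow> real^'n^'m \<Rightarrow> real^'n^'m \<Rightarrow> real) \<Rightarrow> 'm \<Rightarrow> 'n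
    \<Rightarrow> real^'n \<Rightarrow> real^'m \<Rightarrow> real^'n^'m \<Rightarrow> real^'n^'m \<Rightarrow> real" where
  "dFv F k i t x v w = deriv (\<lambda>s. F t x (upd2 v k i s) w) (v $ k $ i)"

definition dFw :: "(real^'n \<Rightarrow> real^'m \<Rightarrow> real^'n^'m \<Rightarrow> real^'n^'m \<Rightarrow> real) \<Rightarrow> 'm \<Rightarrow> 'n
    \<Rightarrow> real^'n \<Rightarrow> real^'m \<Rightarrow> real^'n^'m \<Rightarrow> real^'n^'m \<Rightarrow> real" where
  "dFw F k i t x v w = deriv (\<lambda>s. F t x v (upd2 w k i s)) (w $ k $ i)"

definition C1_on :: "'a::real_normed_vector set \<Rightarrow> ('a \<Rightarrow> 'b::real_normed_vector) \<Rightarrow> bool" where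
  "C1_on D G \<longleftrightarrow> (\<exists>G'. (\<forall>z\<in>D. (G has_derivative blinfun_apply (G' z)) (at z within D))
                       \<and> continuous_on D G')"

definition C2_on :: "'a::real_normed_vector set \<Rightarrow> ('a \<Rightarrow> real) \<Rightarrow> bool" where
  "C2_on D G \<longleftrightarrow> (\<exists>G' G''. (\<forall>z\<in>D. (G has_derivative blinfun_apply (G' z)) (at z within D))
     \<and> (\<forall>z\<in>D. (G' has_derivative blinfun_apply (G'' z)) (at z within D))
     \<and> continuous_on D G'')"

definition regular_fn :: "(real \<Rightarrow> real \<Rightarrow> real) \<Rightarrow> real^'n \<Rightarrow> real^'n \<Rightarrow> real^'n \<Rightarrow> real^'n
    \<Rightarrow> real^'n \<Rightarrow> real^'n \<Rightarrow> real^'n \<Rightarrow> real^'n \<Rightarrow> (real^'n \<Rightarrow> real^'m) \<Rightarrow> bool" where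
  "regular_fn kern \<alpha> \<beta> a b p1 q1 p2 q2 g \<longleftrightarrow> C1_box a b g \<and>
     (\<forall>i k. continuous_on (cbox a b) (Bop kern (\<alpha> $ i) a b (p1 $ i) (q1 $ i) i (\<lambda>s. g s $ k))) \<and>
     (\<forall>i k. continuous_on (cbox a b) (Kop kern (\<beta> $ i) a b (p2 $ i) (q2 $ i) i (\<lambda>s. g s $ k)))"

text \<open>The bilinear operators D and I (P^1, P^2 given by coefficients p, q; the dual
parameter set swaps p and q).\<close>
definition Dop :: "(real \<Rightarrow> real \<Rightarrow> real) \<Rightarrow> real \<Rightarrow> real^'n \<Rightarrow> real^'n \<Rightarrow> real \<Rightarrow> real \<Rightarrow> 'n
    \<Rightarrow> (real^'n \<Rightarrow> real) \<Rightarrow> (real^'n \<Rightarrow> real) \<Rightarrow> real^'n \<Rightarrow> real" where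
  "Dop kern \<alpha> a b p q i f g t = f t * Aop kern \<alpha> a b q p i g t + g t * Bop kern \<alpha> a b p q i f t"

definition Iop :: "(real \<Rightarrow> real \<Rightarrow> real) \<Rightarrow> real \<Rightarrow> real^'n \<Rightarrow> real^'n \<Rightarrow> real \<Rightarrow> real \<Rightarrow> 'n
    \<Rightarrow> (real^'n \<Rightarrow> real) \<Rightarrow> (real^'n \<Rightarrow> real) \<Rightarrow> real^'n \<Rightarrow> real" where
  "Iop kern \<beta> a b p q i f g t = - f t * Kop kern \<beta> a b q p i g t + g t * Kop kern \<beta> a b p q i f t"

end

theory Submission
  imports Defs
begin

(*
  Invariance on every subrectangle and continuity of the integrands force F{u_eps}(t) = F{u}(t)
  at each interior point t for all small eps.  As the fractional operators are linear,
  eps |-> F{u_eps}(t) is F evaluated along a curve z + eps d + o(eps) with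
  d = (0, xi^(t), grad_B xi^(t), grad_K xi^(t)), so the derivative of F at z kills d:
    sum_k xi^_k dF/dx_k + sum_{k,i} (B xi^_k dF/dv_{k,i} + K xi^_k dF/dw_{k,i}) = 0.
  Substituting dF/dx_k from the Euler-Lagrange equations yields the claim by the definition
  of D and I.  No integration by parts occurs, so (R), the boundary values, the ranges of
  alpha and beta and the regularity of xi itself are never used.
*)

lemma set_integrable_mult_continuous_Icc:
  fixes g k h :: "real \<Rightarrow> real"
  assumes g: "integrable lborel g" and h: "continuous_on {lo..hi} h"
    and eq: "\<And>\<tau>. \<tau> \<in> {lo<..<hi} \<Longrightarrow> g \<tau> = k \<tau>"
  shows "set_integrable lborel {lo..hi} (\<lambda>\<tau>. k \<tau> * h \<tau>)"
proof -
  obtain M where M: "\<forall>\<tau>\<in>{lo..hi}. \<bar>h \<tau>\<bar> \<le> M"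
    using compact_imp_bounded[OF compact_continuous_image[OF h compact_Icc]]
    by (auto simp: bounded_iff)
  have "integrable lborel (\<lambda>\<tau>. (indicator {lo<..<hi} \<tau> *\<^sub>R h \<tau>) * g \<tau>)"
  proof (rule Bochner_Integration.integrable_bound)
    show "integrable lborel (\<lambda>\<tau>. M * g \<tau>)" using g by auto
    have "(\<lambda>\<tau>. indicator {lo<..<hi} \<tau> *\<^sub>R h \<tau>) \<in> borel_measurable borel"
      by (rule borel_measurable_continuous_on_indicator) (auto intro: continuous_on_subset[OF h])
    then show "(\<lambda>\<tau>. (indicator {lo<..<hi} \<tau> *\<^sub>R h \<tau>) * g \<tau>) \<in> borel_measurable lborel"
      using g by measurable
    show "AE \<tau> in lborel. norm ((indicator {lo<..<hi} \<tau> *\<^sub>R h \<tau>) * g \<tau>) \<le> norm (M * g \<tau>)"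
      using M by (intro AE_I2)
        (force simp: indicator_def abs_mult intro: mult_right_mono order_trans[OF _ abs_ge_self])
  qed
  then show ?thesis
    unfolding set_integrable_def
    by (subst integrable_discrete_difference[where X="{lo,hi}"]) (use eq in \<open>auto simp: indicator_def\<close>)
qed

lemma set_integrable_kernel_left:
  fixes k h :: "real \<Rightarrow> real"
  assumes k: "set_integrable lborel {0<..<L} k" and h: "continuous_on {lo..hi} h"
    and "hi - lo \<le> L"
  shows "set_integrable lborel {lo..hi} (\<lambda>\<tau>. k (hi - \<tau>) * h \<tau>)"
proof -
  have "integrable lborel (\<lambda>x. indicator {0<..<L} x *\<^sub>R k x)"
    using k by (simp add: set_integrable_def)
  from lborel_integrable_real_affine[OF this, of "-1" hi]
  have "integrable lborel (\<lambda>\<tau>. indicator {0<..<L} (hi - \<tau>) *\<^sub>R k (hi - \<tau>))" by simp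
  then show ?thesis
    by (rule set_integrable_mult_continuous_Icc[OF _ h])
       (use assms(3) in \<open>auto simp: indicator_def\<close>)
qed

lemma set_integrable_kernel_right:
  fixes k h :: "real \<Rightarrow> real"
  assumes k: "set_integrable lborel {0<..<L} k" and h: "continuous_on {lo..hi} h"
    and "hi - lo \<le> L"
  shows "set_integrable lborel {lo..hi} (\<lambda>\<tau>. k (\<tau> - lo) * h \<tau>)"
proof -
  have "integrable lborel (\<lambda>x. indicator {0<..<L} x *\<^sub>R k x)"
    using k by (simp add: set_integrable_def)
  from lborel_integrable_real_affine[OF this, of 1 "-lo"]
  have "integrable lborel (\<lambda>\<tau>. indicator {0<..<L} (\<tau> - lo) *\<^sub>R k (\<tau> - lo))" by simp
  then show ?thesis
    by (rule set_integrable_mult_continuous_Icc[OF _ h])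
       (use assms(3) in \<open>auto simp: indicator_def\<close>)
qed

lemma upd_nth [simp]: "upd t i s $ j = (if j = i then s else t $ j)"
  by (simp add: upd_def)

lemma upd_in_cbox:
  fixes t a b :: "real^'n"
  assumes "t \<in> cbox a b" "s \<in> {a $ i .. b $ i}"
  shows "upd t i s \<in> cbox a b"
  using assms unfolding mem_box_cart by auto

lemma continuous_on_upd: "continuous_on S (\<lambda>s. upd t i (s::real))"
  unfolding upd_def by (intro continuous_intros) (case_tac "j = i"; simp)

lemma continuous_on_slice:
  fixes f :: "real^'n \<Rightarrow> real"
  assumes "continuous_on (cbox a b) f" "t \<in> cbox a b" "{lo..hi} \<subseteq> {a $ i .. b $ i}"
  shows "continuous_on {lo..hi} (\<lambda>s. f (upd t i s))"
  by (rule continuous_on_compose2[OF assms(1) continuous_on_upd]) (use assms upd_in_cbox in blast)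

lemma Kop_cong:
  assumes "t \<in> cbox a b" "\<And>s. s \<in> cbox a b \<Longrightarrow> f s = g s"
  shows "Kop kern \<gamma> a b p q i f t = Kop kern \<gamma> a b p q i g t"
proof -
  have "t $ i \<in> {a $ i .. b $ i}" using assms by (simp add: mem_box_cart)
  have eq: "f (upd t i \<tau>) = g (upd t i \<tau>)" if "\<tau> \<in> {a $ i .. b $ i}" for \<tau>
    by (rule assms(2)[OF upd_in_cbox[OF assms(1) that]])
  have "(LINT \<tau>:{a $ i .. t $ i}|lborel. kern \<gamma> (t $ i - \<tau>) * f (upd t i \<tau>))
      = (LINT \<tau>:{a $ i .. t $ i}|lborel. kern \<gamma> (t $ i - \<tau>) * g (upd t i \<tau>))"
    using \<open>t $ i \<in> _\<close> by (intro set_lebesgue_integral_cong) (auto simp: eq)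
  moreover have "(LINT \<tau>:{t $ i .. b $ i}|lborel. kern \<gamma> (\<tau> - t $ i) * f (upd t i \<tau>))
      = (LINT \<tau>:{t $ i .. b $ i}|lborel. kern \<gamma> (\<tau> - t $ i) * g (upd t i \<tau>))"
    using \<open>t $ i \<in> _\<close> by (intro set_lebesgue_integral_cong) (auto simp: eq)
  ultimately show ?thesis unfolding Kop_def by simp
qed

lemma Kop_add_scaled:
  fixes f g h :: "real^'n \<Rightarrow> real"
  assumes k: "set_integrable lborel {0<..<b $ i - a $ i} (kern \<gamma>)"
    and f: "continuous_on (cbox a b) f" and g: "continuous_on (cbox a b) g"
    and h: "continuous_on (cbox a b) h" and t: "t \<in> cbox a b"
  shows "Kop kern \<gamma> a b p q i (\<lambda>s. f s + c * g s + h s) t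
       = Kop kern \<gamma> a b p q i f t + c * Kop kern \<gamma> a b p q i g t + Kop kern \<gamma> a b p q i h t"
proof -
  have ti: "a $ i \<le> t $ i" "t $ i \<le> b $ i" using t by (auto simp: mem_box_cart)
  have left: "set_integrable lborel {a $ i .. t $ i} (\<lambda>\<tau>. kern \<gamma> (t $ i - \<tau>) * F (upd t i \<tau>))"
    and right: "set_integrable lborel {t $ i .. b $ i} (\<lambda>\<tau>. kern \<gamma> (\<tau> - t $ i) * F (upd t i \<tau>))"
    if "continuous_on (cbox a b) F" for F :: "real^'n \<Rightarrow> real"
    using ti by (auto intro!: set_integrable_kernel_left[OF k] set_integrable_kernel_right[OF k]
                   continuous_on_slice[OF that t])
  show ?thesis
    unfolding Kop_def distrib_left mult.left_commute[of _ c]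
    using left[OF f] left[OF g] left[OF h] right[OF f] right[OF g] right[OF h]
    by (simp add: set_integral_add algebra_simps)
qed

lemma partial_eqI:
  fixes f :: "real^'n \<Rightarrow> 'b::euclidean_space"
  assumes ab: "\<forall>i. a $ i < b $ i" and t: "t \<in> cbox a b"
    and "((\<lambda>s. f (upd t i s)) has_vector_derivative D) (at (t $ i) within {a $ i .. b $ i})"
  shows "partial a b i f t = D"
  unfolding partial_def
  by (rule vector_derivative_within_closed_interval[OF _ _ assms(3)])
     (use ab t in \<open>auto simp: mem_box_cart\<close>)

lemma has_vector_derivative_vec_nth:
  assumes "(f has_vector_derivative D) F"
  shows "((\<lambda>x. f x $ k) has_vector_derivative D $ k) F"
  using bounded_linear.has_derivative[OF bounded_linear_vec_nth assms[unfolded has_vector_derivative_def]]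
  by (simp add: has_vector_derivative_def)

lemma C1_box_component:
  fixes u :: "real^'n \<Rightarrow> real^'m"
  assumes ab: "\<forall>i. a $ i < b $ i" and u: "C1_box a b u"
  shows "C1_box a b (\<lambda>s. u s $ k)"
proof -
  have partial_component: "partial a b i (\<lambda>s. u s $ k) t = partial a b i u t $ k"
    if "t \<in> cbox a b" for t i
    by (rule partial_eqI[OF ab that has_vector_derivative_vec_nth])
       (use u that in \<open>auto simp: C1_box_def\<close>)
  show ?thesis
    unfolding C1_box_def
  proof (intro conjI allI ballI)
    show "continuous_on (cbox a b) (\<lambda>s. u s $ k)"
      using u by (auto simp: C1_box_def intro: continuous_on_component)
    fix i
    show "((\<lambda>s. u (upd t i s) $ k) has_vector_derivative partial a b i (\<lambda>s. u s $ k) t)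
            (at (t $ i) within {a $ i..b $ i})" if "t \<in> cbox a b" for t
      using has_vector_derivative_vec_nth[of "\<lambda>s. u (upd t i s)"] u that partial_component[OF that]
      by (auto simp: C1_box_def)
    have "continuous_on (cbox a b) (\<lambda>t. partial a b i u t $ k)"
      using u by (auto simp: C1_box_def intro: continuous_on_component)
    then show "continuous_on (cbox a b) (partial a b i (\<lambda>s. u s $ k))"
      by (rule continuous_on_eq) (use partial_component in auto)
  qed
qed

lemma partial_add_scaled:
  fixes f g h :: "real^'n \<Rightarrow> real"
  assumes ab: "\<forall>i. a $ i < b $ i"
    and f: "C1_box a b f" and g: "C1_box a b g" and h: "C1_box a b h" and t: "t \<in> cbox a b"
  shows "partial a b i (\<lambda>s. f s + c * g s + h s) t
       = partial a b i f t + c * partial a b i g t + partial a b i h t"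
proof (rule partial_eqI[OF ab t])
  have "((\<lambda>s. F (upd t i s)) has_field_derivative partial a b i F t) (at (t $ i) within {a $ i..b $ i})"
    if "C1_box a b F" for F :: "real^'n \<Rightarrow> real"
    using that t by (auto simp: C1_box_def has_real_derivative_iff_has_vector_derivative)
  from this[OF f] this[OF g] this[OF h]
  show "((\<lambda>s. f (upd t i s) + c * g (upd t i s) + h (upd t i s)) has_vector_derivative
      partial a b i f t + c * partial a b i g t + partial a b i h t) (at (t $ i) within {a $ i..b $ i})"
    unfolding has_real_derivative_iff_has_vector_derivative[symmetric]
    by (intro DERIV_add DERIV_cmult)
qed

lemma Bop_add_scaled:
  fixes f g h :: "real^'n \<Rightarrow> real"
  assumes ab: "\<forall>i. a $ i < b $ i"
    and k: "set_integrable lborel {0<..<b $ i - a $ i} (kern (1 - \<alpha>))"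
    and f: "C1_box a b f" and g: "C1_box a b g" and h: "C1_box a b h" and t: "t \<in> cbox a b"
  shows "Bop kern \<alpha> a b p q i (\<lambda>s. f s + c * g s + h s) t
     = Bop kern \<alpha> a b p q i f t + c * Bop kern \<alpha> a b p q i g t + Bop kern \<alpha> a b p q i h t"
proof -
  have "Bop kern \<alpha> a b p q i (\<lambda>s. f s + c * g s + h s) t
      = Kop kern (1 - \<alpha>) a b p q i
          (\<lambda>s. partial a b i f s + c * partial a b i g s + partial a b i h s) t"
    unfolding Bop_def by (rule Kop_cong[OF t]) (rule partial_add_scaled[OF ab f g h])
  also have "\<dots> = Bop kern \<alpha> a b p q i f t + c * Bop kern \<alpha> a b p q i g t + Bop kern \<alpha> a b p q i h t"
    unfolding Bop_def
    by (rule Kop_add_scaled[where kern=kern and \<gamma>="1 - \<alpha>", OF k]) (use f g h t in \<open>auto simp: C1_box_def\<close>)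
  finally show ?thesis .
qed

lemma gradB_add_scaled:
  fixes u g h :: "real^'n \<Rightarrow> real^'m"
  assumes ab: "\<forall>i. a $ i < b $ i"
    and k: "\<forall>i. set_integrable lborel {0<..<b $ i - a $ i} (kern (1 - \<alpha> $ i))"
    and u: "C1_box a b u" and g: "C1_box a b g" and h: "C1_box a b h" and t: "t \<in> cbox a b"
  shows "gradB kern \<alpha> a b p q (\<lambda>s. u s + c *\<^sub>R g s + h s) t
     = gradB kern \<alpha> a b p q u t + c *\<^sub>R gradB kern \<alpha> a b p q g t + gradB kern \<alpha> a b p q h t"
proof -
  have "Bop kern (\<alpha> $ i) a b (p $ i) (q $ i) i (\<lambda>s. u s $ k + c * g s $ k + h s $ k) t
      = Bop kern (\<alpha> $ i) a b (p $ i) (q $ i) i (\<lambda>s. u s $ k) t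
        + c * Bop kern (\<alpha> $ i) a b (p $ i) (q $ i) i (\<lambda>s. g s $ k) t
        + Bop kern (\<alpha> $ i) a b (p $ i) (q $ i) i (\<lambda>s. h s $ k) t" for i k
    by (rule Bop_add_scaled[where kern=kern and \<alpha>="\<alpha> $ i", OF ab k[rule_format, of i] C1_box_component[OF ab u, of k]
          C1_box_component[OF ab g, of k] C1_box_component[OF ab h, of k] t])
  then show ?thesis by (simp add: gradB_def vec_eq_iff)
qed

lemma gradK_add_scaled:
  fixes u g h :: "real^'n \<Rightarrow> real^'m"
  assumes k: "\<forall>i. set_integrable lborel {0<..<b $ i - a $ i} (kern (\<beta> $ i))"
    and u: "continuous_on (cbox a b) u" and g: "continuous_on (cbox a b) g"
    and h: "continuous_on (cbox a b) h" and t: "t \<in> cbox a b"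
  shows "gradK kern \<beta> a b p q (\<lambda>s. u s + c *\<^sub>R g s + h s) t
     = gradK kern \<beta> a b p q u t + c *\<^sub>R gradK kern \<beta> a b p q g t + gradK kern \<beta> a b p q h t"
proof -
  have "Kop kern (\<beta> $ i) a b (p $ i) (q $ i) i (\<lambda>s. u s $ k + c * g s $ k + h s $ k) t
      = Kop kern (\<beta> $ i) a b (p $ i) (q $ i) i (\<lambda>s. u s $ k) t
        + c * Kop kern (\<beta> $ i) a b (p $ i) (q $ i) i (\<lambda>s. g s $ k) t
        + Kop kern (\<beta> $ i) a b (p $ i) (q $ i) i (\<lambda>s. h s $ k) t" for i k
    by (rule Kop_add_scaled[where kern=kern and \<gamma>="\<beta> $ i", OF k[rule_format, of i] continuous_on_component[OF u, of k]
          continuous_on_component[OF g, of k] continuous_on_component[OF h, of k] t])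
  then show ?thesis by (simp add: gradK_def vec_eq_iff)
qed

lemma set_integrable_box_subset:
  fixes f :: "real^'n \<Rightarrow> real"
  assumes "continuous_on (cbox a b) f" "box c d \<subseteq> cbox a b"
  shows "set_integrable lborel (box c d) f"
proof -
  have "set_integrable lborel (cbox a b) f"
    using borel_integrable_compact[OF compact_cbox assms(1)] unfolding set_integrable_def .
  then show ?thesis by (rule set_integrable_subset) (use assms(2) in auto)
qed

lemma nonpos_if_box_integrals_zero:
  fixes h :: "real^'n \<Rightarrow> real"
  assumes cont: "continuous_on (cbox a b) h"
    and int0: "\<forall>c d. box c d \<subseteq> box a b \<longrightarrow> (LINT x:box c d|lborel. h x) = 0"
    and t: "t \<in> box a b"
  shows "h t \<le> 0"
proof (rule ccontr)
  assume "\<not> h t \<le> 0"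
  then have pos: "h t > 0" by simp
  have "open (box a b \<inter> h -` {h t / 2 <..})"
    using continuous_on_subset[OF cont box_subset_cbox]
    by (intro continuous_open_preimage) auto
  moreover have "t \<in> box a b \<inter> h -` {h t / 2 <..}" using t pos by simp
  ultimately obtain c d where cd: "cbox c d \<subseteq> box a b \<inter> h -` {h t / 2 <..}"
      and ne: "\<forall>i\<in>Basis. c \<bullet> i < d \<bullet> i"
    by (rule open_contains_cbox)
  have sub: "box c d \<subseteq> box a b" using cd box_subset_cbox by blast
  have "0 < measure lborel (box c d) * (h t / 2)"
    using ne pos unfolding measure_lborel_box_eq
    by (auto intro!: mult_pos_pos prod_pos simp: less_imp_le inner_diff_left)
  also have "\<dots> = (LINT x:box c d|lborel. h t / 2)"
    using emeasure_bounded_finite[OF bounded_box[of c d]] by (subst set_integral_const) auto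
  also have "\<dots> \<le> (LINT x:box c d|lborel. h x)"
  proof (rule set_integral_mono)
    show "set_integrable lborel (box c d) (\<lambda>_. h t / 2)"
      by (rule set_integrable_box_subset[OF continuous_on_const box_subset_cbox])
    show "set_integrable lborel (box c d) h"
      using sub box_subset_cbox[of a b] by (intro set_integrable_box_subset[OF cont]) blast
    show "h t / 2 \<le> h x" if "x \<in> box c d" for x
      using that cd box_subset_cbox[of c d] by force
  qed
  finally show False using int0 sub by simp
qed

lemma zero_if_box_integrals_zero:
  fixes h :: "real^'n \<Rightarrow> real"
  assumes cont: "continuous_on (cbox a b) h"
    and int0: "\<forall>c d. box c d \<subseteq> box a b \<longrightarrow> (LINT x:box c d|lborel. h x) = 0"
    and t: "t \<in> box a b"
  shows "h t = 0"
proof -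
  have "\<forall>c d. box c d \<subseteq> box a b \<longrightarrow> (LINT x:box c d|lborel. - h x) = 0"
    using int0 by (simp add: set_lebesgue_integral_def)
  then have "- h t \<le> 0"
    by (rule nonpos_if_box_integrals_zero[OF continuous_on_minus[OF cont] _ t])
  then show ?thesis using nonpos_if_box_integrals_zero[OF cont int0 t] by simp
qed

lemma Feval_add_scaled:
  fixes u g h :: "real^'n \<Rightarrow> real^'m"
  assumes ab: "\<forall>i. a $ i < b $ i"
    and kB: "\<forall>i. set_integrable lborel {0<..<b $ i - a $ i} (kern (1 - \<alpha> $ i))"
    and kK: "\<forall>i. set_integrable lborel {0<..<b $ i - a $ i} (kern (\<beta> $ i))"
    and u: "C1_box a b u" and g: "C1_box a b g" and h: "C1_box a b h" and s: "s \<in> cbox a b"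
  shows "Feval F kern \<alpha> \<beta> a b p1 q1 p2 q2 (\<lambda>s. u s + \<epsilon> *\<^sub>R g s + h s) s
    = F s (u s + \<epsilon> *\<^sub>R g s + h s)
        (gradB kern \<alpha> a b p1 q1 u s + \<epsilon> *\<^sub>R gradB kern \<alpha> a b p1 q1 g s + gradB kern \<alpha> a b p1 q1 h s)
        (gradK kern \<beta> a b p2 q2 u s + \<epsilon> *\<^sub>R gradK kern \<beta> a b p2 q2 g s + gradK kern \<beta> a b p2 q2 h s)"
proof -
  have "continuous_on (cbox a b) u" "continuous_on (cbox a b) g" "continuous_on (cbox a b) h"
    using u g h by (simp_all add: C1_box_def)
  from gradK_add_scaled[OF kK this s]
  show ?thesis by (simp add: Feval_def gradB_add_scaled[OF ab kB u g h s])
qed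

lemma continuous_on_gradB:
  assumes "regular_fn kern \<alpha> \<beta> a b p1 q1 p2 q2 g"
  shows "continuous_on (cbox a b) (gradB kern \<alpha> a b p1 q1 g)"
  unfolding gradB_def by (intro continuous_on_vec_lambda) (use assms in \<open>simp add: regular_fn_def\<close>)

lemma continuous_on_gradK:
  assumes "regular_fn kern \<alpha> \<beta> a b p1 q1 p2 q2 g"
  shows "continuous_on (cbox a b) (gradK kern \<beta> a b p2 q2 g)"
  unfolding gradK_def by (intro continuous_on_vec_lambda) (use assms in \<open>simp add: regular_fn_def\<close>)

lemma continuous_on_regular_fn:
  assumes "regular_fn kern \<alpha> \<beta> a b p1 q1 p2 q2 g"
  shows "continuous_on (cbox a b) g"
  using assms by (simp add: regular_fn_def C1_box_def)

lemma continuous_on_compose_Lagrangian: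
  assumes F: "continuous_on (cbox a b \<times> UNIV \<times> UNIV \<times> UNIV) (\<lambda>(t, x, v, w). F t x v w)"
    and "continuous_on (cbox a b) X" "continuous_on (cbox a b) V" "continuous_on (cbox a b) W"
  shows "continuous_on (cbox a b) (\<lambda>s. F s (X s) (V s) (W s))"
  by (rule continuous_on_compose2[OF F, where f="\<lambda>s. (s, X s, V s, W s)", simplified])
     (use assms in \<open>auto intro!: continuous_intros\<close>)

lemma invariance_pointwise:
  fixes u g h :: "real^'n \<Rightarrow> real^'m"
  assumes ab: "\<forall>i. a $ i < b $ i"
    and kB: "\<forall>i. set_integrable lborel {0<..<b $ i - a $ i} (kern (1 - \<alpha> $ i))"
    and kK: "\<forall>i. set_integrable lborel {0<..<b $ i - a $ i} (kern (\<beta> $ i))"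
    and F: "continuous_on (cbox a b \<times> UNIV \<times> UNIV \<times> UNIV) (\<lambda>(t, x, v, w). F t x v w)"
    and u: "regular_fn kern \<alpha> \<beta> a b p1 q1 p2 q2 u"
    and g: "regular_fn kern \<alpha> \<beta> a b p1 q1 p2 q2 g"
    and h: "regular_fn kern \<alpha> \<beta> a b p1 q1 p2 q2 h"
    and inv: "\<forall>c d. box c d \<subseteq> box a b \<longrightarrow>
       (LINT t:box c d|lborel. Feval F kern \<alpha> \<beta> a b p1 q1 p2 q2 u t) =
       (LINT t:box c d|lborel. Feval F kern \<alpha> \<beta> a b p1 q1 p2 q2 (\<lambda>s. u s + \<epsilon> *\<^sub>R g s + h s) t)"
    and t: "t \<in> box a b"
  shows "F t (u t + \<epsilon> *\<^sub>R g t + h t)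
        (gradB kern \<alpha> a b p1 q1 u t + \<epsilon> *\<^sub>R gradB kern \<alpha> a b p1 q1 g t + gradB kern \<alpha> a b p1 q1 h t)
        (gradK kern \<beta> a b p2 q2 u t + \<epsilon> *\<^sub>R gradK kern \<beta> a b p2 q2 g t + gradK kern \<beta> a b p2 q2 h t)
     = Feval F kern \<alpha> \<beta> a b p1 q1 p2 q2 u t"
proof -
  define \<phi> where "\<phi> s = F s (u s + \<epsilon> *\<^sub>R g s + h s)
        (gradB kern \<alpha> a b p1 q1 u s + \<epsilon> *\<^sub>R gradB kern \<alpha> a b p1 q1 g s + gradB kern \<alpha> a b p1 q1 h s)
        (gradK kern \<beta> a b p2 q2 u s + \<epsilon> *\<^sub>R gradK kern \<beta> a b p2 q2 g s + gradK kern \<beta> a b p2 q2 h s)"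
    for s
  have C1: "C1_box a b u" "C1_box a b g" "C1_box a b h"
    using u g h by (simp_all add: regular_fn_def)
  have \<phi>_eq: "Feval F kern \<alpha> \<beta> a b p1 q1 p2 q2 (\<lambda>s. u s + \<epsilon> *\<^sub>R g s + h s) s = \<phi> s"
    if "s \<in> cbox a b" for s
    unfolding \<phi>_def by (rule Feval_add_scaled[OF ab kB kK C1 that])
  have cont_\<phi>: "continuous_on (cbox a b) \<phi>"
    unfolding \<phi>_def
    using u g h by (intro continuous_on_compose_Lagrangian[OF F] continuous_intros
        continuous_on_regular_fn continuous_on_gradB continuous_on_gradK)
  have cont_u: "continuous_on (cbox a b) (Feval F kern \<alpha> \<beta> a b p1 q1 p2 q2 u)"
    unfolding Feval_def
    using u by (intro continuous_on_compose_Lagrangian[OF F]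
        continuous_on_regular_fn continuous_on_gradB continuous_on_gradK)
  have "\<phi> t - Feval F kern \<alpha> \<beta> a b p1 q1 p2 q2 u t = 0"
  proof (rule zero_if_box_integrals_zero[OF continuous_on_diff[OF cont_\<phi> cont_u] _ t],
         intro allI impI)
    fix c d assume cd: "box c d \<subseteq> box a b"
    have "(LINT s:box c d|lborel. \<phi> s)
        = (LINT s:box c d|lborel. Feval F kern \<alpha> \<beta> a b p1 q1 p2 q2 (\<lambda>s. u s + \<epsilon> *\<^sub>R g s + h s) s)"
      using cd box_subset_cbox[of a b] by (intro set_lebesgue_integral_cong) (auto simp: \<phi>_eq)
    then show "(LINT s:box c d|lborel. \<phi> s - Feval F kern \<alpha> \<beta> a b p1 q1 p2 q2 u s) = 0"
      using inv cd box_subset_cbox[of a b]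
        set_integrable_box_subset[OF cont_\<phi>, of c d] set_integrable_box_subset[OF cont_u, of c d]
      by (simp add: set_integral_diff subset_trans)
  qed
  then show ?thesis by (simp add: \<phi>_def)
qed

lemma has_derivative_zero_along_invariant_curve:
  fixes G :: "'a::real_normed_vector \<Rightarrow> real"
  assumes G: "(G has_derivative L) (at z)"
    and \<rho>: "((\<lambda>\<epsilon>. \<rho> \<epsilon> /\<^sub>R \<epsilon>) \<longlongrightarrow> 0) (at 0)"
    and inv: "\<forall>\<^sub>F \<epsilon> in at 0. G (z + \<epsilon> *\<^sub>R d + \<rho> \<epsilon>) = G z"
  shows "L d = 0"
proof -
  \<comment> \<open>\<open>\<rho> 0\<close> is unconstrained, so the curve is pinned to \<open>z\<close> at \<open>0\<close> by hand\<close>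
  define \<phi> where "\<phi> \<epsilon> = (if \<epsilon> = 0 then z else z + \<epsilon> *\<^sub>R d + \<rho> \<epsilon>)" for \<epsilon> :: real
  have "(\<phi> has_derivative (\<lambda>h. h *\<^sub>R d)) (at 0)"
    unfolding has_derivative_at_within
  proof (intro conjI bounded_linear_scaleR_left)
    have "((\<lambda>\<epsilon>. norm (\<rho> \<epsilon> /\<^sub>R \<epsilon>)) \<longlongrightarrow> 0) (at 0)" using tendsto_norm_zero[OF \<rho>] .
    moreover have "\<forall>\<^sub>F \<epsilon> in at 0. norm (\<rho> \<epsilon> /\<^sub>R \<epsilon>)
        = norm (((\<phi> \<epsilon> - \<phi> 0) - (\<epsilon> - 0) *\<^sub>R d) /\<^sub>R norm (\<epsilon> - 0))"
      unfolding eventually_at_filter by (rule always_eventually) (simp add: \<phi>_def)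
    ultimately have "((\<lambda>\<epsilon>. norm (((\<phi> \<epsilon> - \<phi> 0) - (\<epsilon> - 0) *\<^sub>R d) /\<^sub>R norm (\<epsilon> - 0))) \<longlongrightarrow> 0) (at 0)"
      by (rule Lim_transform_eventually)
    then show "((\<lambda>\<epsilon>. ((\<phi> \<epsilon> - \<phi> 0) - (\<epsilon> - 0) *\<^sub>R d) /\<^sub>R norm (\<epsilon> - 0)) \<longlongrightarrow> 0) (at 0)"
      by (rule tendsto_norm_zero_cancel)
  qed
  moreover have "\<phi> 0 = z" by (simp add: \<phi>_def)
  ultimately have "((\<lambda>\<epsilon>. G (\<phi> \<epsilon>)) has_derivative (\<lambda>h. L (h *\<^sub>R d))) (at 0)"
    using has_derivative_compose[of \<phi> _ 0 UNIV G L] G by simp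
  moreover have "(\<lambda>h. L (h *\<^sub>R d)) = (*) (L d)"
    using linear_scale[OF bounded_linear.linear[OF has_derivative_bounded_linear[OF G]]]
    by (auto simp: mult.commute)
  ultimately have "((\<lambda>\<epsilon>. G (\<phi> \<epsilon>)) has_field_derivative L d) (at 0)"
    by (simp add: has_field_derivative_def)
  moreover have "\<forall>\<^sub>F \<epsilon> in nhds 0. G (\<phi> \<epsilon>) = G z"
    using inv unfolding eventually_at_filter by eventually_elim (simp add: \<phi>_def)
  ultimately have "((\<lambda>_. G z) has_field_derivative L d) (at 0)"
    using DERIV_cong_ev[of 0 0 "\<lambda>\<epsilon>. G (\<phi> \<epsilon>)" "\<lambda>_. G z" "L d" "L d"] by simp
  then show ?thesis using DERIV_const DERIV_unique by blast
qed

lemma deriv_along_line: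
  fixes G :: "'a::real_normed_vector \<Rightarrow> real"
  assumes "(G has_derivative L) (at z)"
  shows "deriv (\<lambda>s. G (z + (s - s0) *\<^sub>R e)) s0 = L e"
proof -
  have "((\<lambda>s. z + (s - s0) *\<^sub>R e) has_derivative (\<lambda>h. h *\<^sub>R e)) (at s0)"
    by (auto intro!: derivative_eq_intros)
  from has_derivative_compose[OF this, of G L] assms
  have "((\<lambda>s. G (z + (s - s0) *\<^sub>R e)) has_derivative (\<lambda>h. L (h *\<^sub>R e))) (at s0)" by simp
  moreover have "(\<lambda>h. L (h *\<^sub>R e)) = (*) (L e)"
    using linear_scale[OF bounded_linear.linear[OF has_derivative_bounded_linear[OF assms]]]
    by (auto simp: mult.commute)
  ultimately show ?thesis
    by (intro DERIV_imp_deriv) (simp add: has_field_derivative_def)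
qed

lemma upd_eq_add_axis: "upd x k s = x + (s - x $ k) *\<^sub>R axis k (1::real)"
  by (simp add: vec_eq_iff upd_def axis_def)

lemma upd2_eq_add_axis: "upd2 v k i s = v + (s - v $ k $ i) *\<^sub>R axis k (axis i (1::real))"
  by (simp add: vec_eq_iff upd2_def upd_def axis_def)

lemma sum_axis_expansion: "(\<Sum>k\<in>UNIV. X $ k *\<^sub>R axis k (1::real)) = X"
  using basis_expansion[of X] by (simp add: scalar_mult_eq_scaleR)

lemma sum_axis_axis_expansion:
  "(\<Sum>k\<in>UNIV. \<Sum>i\<in>UNIV. V $ k $ i *\<^sub>R axis k (axis i (1::real))) = V"
proof -
  have "(\<Sum>i\<in>UNIV. V $ k $ i *\<^sub>R axis k (axis i (1::real))) = axis k (V $ k)" for k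
  proof -
    have "(\<Sum>i\<in>UNIV. V $ k $ i *\<^sub>R axis k (axis i (1::real)))
        = axis k (\<Sum>i\<in>UNIV. V $ k $ i *\<^sub>R axis i (1::real))"
      by (simp add: vec_eq_iff axis_def)
    then show ?thesis by (simp add: sum_axis_expansion)
  qed
  moreover have "(\<Sum>k\<in>UNIV. axis k (V $ k)) = V"
    by (simp add: vec_eq_iff axis_def if_distrib cong: if_cong)
  ultimately show ?thesis by simp
qed

lemma Lagrangian_derivative_expansion:
  fixes F :: "real^'n \<Rightarrow> real^'m \<Rightarrow> real^'n^'m \<Rightarrow> real^'n^'m \<Rightarrow> real"
  assumes F: "((\<lambda>(t, x, v, w). F t x v w) has_derivative L) (at (t, x, v, w))"
  shows "L (0, X, V, W) = (\<Sum>k\<in>UNIV. X $ k * dFx F k t x v w)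
     + (\<Sum>k\<in>UNIV. \<Sum>i\<in>UNIV. V $ k $ i * dFv F k i t x v w)
     + (\<Sum>k\<in>UNIV. \<Sum>i\<in>UNIV. W $ k $ i * dFw F k i t x v w)"
proof -
  let ?G = "\<lambda>(t, x, v, w). F t x v w"
  have lin: "linear L" using F has_derivative_bounded_linear bounded_linear.linear by blast
  have dx: "dFx F k t x v w = L (0, axis k 1, 0, 0)" for k
  proof -
    have eq: "(\<lambda>s. F t (upd x k s) v w) = (\<lambda>s. ?G ((t, x, v, w) + (s - x $ k) *\<^sub>R (0, axis k 1, 0, 0)))"
      by (simp add: upd_eq_add_axis)
    show ?thesis unfolding dFx_def eq by (rule deriv_along_line[OF F])
  qed
  have dv: "dFv F k i t x v w = L (0, 0, axis k (axis i 1), 0)" for k i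
  proof -
    have eq: "(\<lambda>s. F t x (upd2 v k i s) w)
        = (\<lambda>s. ?G ((t, x, v, w) + (s - v $ k $ i) *\<^sub>R (0, 0, axis k (axis i 1), 0)))"
      by (simp add: upd2_eq_add_axis)
    show ?thesis unfolding dFv_def eq by (rule deriv_along_line[OF F])
  qed
  have dw: "dFw F k i t x v w = L (0, 0, 0, axis k (axis i 1))" for k i
  proof -
    have eq: "(\<lambda>s. F t x v (upd2 w k i s))
        = (\<lambda>s. ?G ((t, x, v, w) + (s - w $ k $ i) *\<^sub>R (0, 0, 0, axis k (axis i 1))))"
      by (simp add: upd2_eq_add_axis)
    show ?thesis unfolding dFw_def eq by (rule deriv_along_line[OF F])
  qed
  have expansion: "(0, X, V, W) = (\<Sum>k\<in>UNIV. X $ k *\<^sub>R (0, axis k 1, 0, 0))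
      + (\<Sum>k\<in>UNIV. \<Sum>i\<in>UNIV. V $ k $ i *\<^sub>R (0, 0, axis k (axis i 1), 0))
      + (\<Sum>k\<in>UNIV. \<Sum>i\<in>UNIV. W $ k $ i *\<^sub>R ((0::real^'n), (0::real^'m), 0, axis k (axis i 1)))"
    by (simp add: sum_prod sum_axis_expansion sum_axis_axis_expansion)
  show ?thesis
    by (subst expansion)
       (simp only: linear_add[OF lin] linear_sum[OF lin] linear_scale[OF lin] dx dv dw real_scaleR_def)
qed

lemma C2_on_continuous_on:
  assumes "C2_on S G"
  shows "continuous_on S G"
proof -
  obtain G' where "\<forall>z\<in>S. (G has_derivative blinfun_apply (G' z)) (at z within S)"
    using assms unfolding C2_on_def by blast
  then show ?thesis by (intro has_derivative_continuous_on) blast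
qed

lemma C2_on_has_derivative_interior:
  assumes "C2_on S G" "z \<in> interior S"
  obtains L where "(G has_derivative L) (at z)"
  using assms at_within_interior[OF assms(2)] interior_subset unfolding C2_on_def by force

lemma remainder_tendsto_zero:
  fixes r :: "real \<Rightarrow> real^'n \<Rightarrow> real^'m"
  assumes r: "((\<lambda>\<epsilon>. norm (r \<epsilon> t) / \<bar>\<epsilon>\<bar>) \<longlongrightarrow> 0) (at 0)"
    and rB: "\<forall>i k. ((\<lambda>\<epsilon>. Bop kern (\<alpha> $ i) a b (p1 $ i) (q1 $ i) i (\<lambda>s. r \<epsilon> s $ k) t / \<epsilon>) \<longlongrightarrow> 0) (at 0)"
    and rK: "\<forall>i k. ((\<lambda>\<epsilon>. Kop kern (\<beta> $ i) a b (p2 $ i) (q2 $ i) i (\<lambda>s. r \<epsilon> s $ k) t / \<epsilon>) \<longlongrightarrow> 0) (at 0)"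
  shows "((\<lambda>\<epsilon>. ((0::real^'n), r \<epsilon> t, gradB kern \<alpha> a b p1 q1 (r \<epsilon>) t,
             gradK kern \<beta> a b p2 q2 (r \<epsilon>) t) /\<^sub>R \<epsilon>) \<longlongrightarrow> 0) (at 0)"
proof -
  have "((\<lambda>\<epsilon>. r \<epsilon> t /\<^sub>R \<epsilon>) \<longlongrightarrow> 0) (at 0)"
    by (rule tendsto_norm_zero_cancel) (use r in \<open>simp add: divide_inverse mult.commute\<close>)
  moreover have "((\<lambda>\<epsilon>. gradB kern \<alpha> a b p1 q1 (r \<epsilon>) t /\<^sub>R \<epsilon>) \<longlongrightarrow> 0) (at 0)"
    by (rule vec_tendstoI)+ (use rB in \<open>simp add: gradB_def divide_inverse mult.commute\<close>)
  moreover have "((\<lambda>\<epsilon>. gradK kern \<beta> a b p2 q2 (r \<epsilon>) t /\<^sub>R \<epsilon>) \<longlongrightarrow> 0) (at 0)"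
    by (rule vec_tendstoI)+ (use rK in \<open>simp add: gradK_def divide_inverse mult.commute\<close>)
  ultimately show ?thesis
    by (simp add: zero_prod_def tendsto_Pair)
qed

lemma euler_lagrange_substitution:
  fixes X dx :: "'m::finite \<Rightarrow> real" and A K dv dw BX KX :: "'m \<Rightarrow> 'n::finite \<Rightarrow> real"
  assumes EL: "\<forall>k. (\<Sum>i\<in>UNIV. - A k i + K k i) + dx k = 0"
    and variation: "(\<Sum>k\<in>UNIV. X k * dx k) + (\<Sum>k\<in>UNIV. \<Sum>i\<in>UNIV. BX k i * dv k i)
              + (\<Sum>k\<in>UNIV. \<Sum>i\<in>UNIV. KX k i * dw k i) = 0"
  shows "(\<Sum>k\<in>UNIV. \<Sum>i\<in>UNIV. X k * A k i + dv k i * BX k i + (- X k * K k i + dw k i * KX k i)) = 0"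
proof -
  have dx: "dx k = (\<Sum>i\<in>UNIV. A k i - K k i)" for k
    using EL[rule_format, of k] by (simp add: sum_subtractf sum_negf)
  have "(\<Sum>k\<in>UNIV. \<Sum>i\<in>UNIV. X k * A k i + dv k i * BX k i + (- X k * K k i + dw k i * KX k i))
      = (\<Sum>k\<in>UNIV. X k * (\<Sum>i\<in>UNIV. A k i - K k i)) + (\<Sum>k\<in>UNIV. \<Sum>i\<in>UNIV. BX k i * dv k i)
              + (\<Sum>k\<in>UNIV. \<Sum>i\<in>UNIV. KX k i * dw k i)"
    by (simp add: sum.distrib sum_distrib_left sum_subtractf algebra_simps)
  also have "\<dots> = 0" using variation by (simp add: dx)
  finally show ?thesis .
qed

lemma first_variation_zero:
  fixes u g :: "real^'n \<Rightarrow> real^'m" and r :: "real \<Rightarrow> real^'n \<Rightarrow> real^'m"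
  assumes ab: "\<forall>i. a $ i < b $ i"
    and kB: "\<forall>i. set_integrable lborel {0<..<b $ i - a $ i} (kern (1 - \<alpha> $ i))"
    and kK: "\<forall>i. set_integrable lborel {0<..<b $ i - a $ i} (kern (\<beta> $ i))"
    and F: "continuous_on (cbox a b \<times> UNIV \<times> UNIV \<times> UNIV) (\<lambda>(t, x, v, w). F t x v w)"
    and u: "regular_fn kern \<alpha> \<beta> a b p1 q1 p2 q2 u"
    and g: "regular_fn kern \<alpha> \<beta> a b p1 q1 p2 q2 g"
    and r: "\<forall>\<epsilon>. regular_fn kern \<alpha> \<beta> a b p1 q1 p2 q2 (r \<epsilon>)"
    and r_small: "((\<lambda>\<epsilon>. norm (r \<epsilon> t) / \<bar>\<epsilon>\<bar>) \<longlongrightarrow> 0) (at 0)"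
    and rB_small: "\<forall>i k.
       ((\<lambda>\<epsilon>. Bop kern (\<alpha> $ i) a b (p1 $ i) (q1 $ i) i (\<lambda>s. r \<epsilon> s $ k) t / \<epsilon>) \<longlongrightarrow> 0) (at 0)"
    and rK_small: "\<forall>i k.
       ((\<lambda>\<epsilon>. Kop kern (\<beta> $ i) a b (p2 $ i) (q2 $ i) i (\<lambda>s. r \<epsilon> s $ k) t / \<epsilon>) \<longlongrightarrow> 0) (at 0)"
    and invariant: "\<exists>\<delta>>0. \<forall>\<epsilon>. \<bar>\<epsilon>\<bar> < \<delta> \<longrightarrow> (\<forall>c d. box c d \<subseteq> box a b \<longrightarrow>
       (LINT t:box c d|lborel. Feval F kern \<alpha> \<beta> a b p1 q1 p2 q2 u t) =
       (LINT t:box c d|lborel. Feval F kern \<alpha> \<beta> a b p1 q1 p2 q2 (\<lambda>s. u s + \<epsilon> *\<^sub>R g s + r \<epsilon> s) t))"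
    and t: "t \<in> box a b"
    and L: "((\<lambda>(t, x, v, w). F t x v w) has_derivative L)
              (at (t, u t, gradB kern \<alpha> a b p1 q1 u t, gradK kern \<beta> a b p2 q2 u t))"
  shows "L (0, g t, gradB kern \<alpha> a b p1 q1 g t, gradK kern \<beta> a b p2 q2 g t) = 0"
proof (rule has_derivative_zero_along_invariant_curve[OF L remainder_tendsto_zero[OF r_small rB_small rK_small]])
  obtain \<delta> where "\<delta> > 0" and inv_\<delta>: "\<forall>\<epsilon>. \<bar>\<epsilon>\<bar> < \<delta> \<longrightarrow> (\<forall>c d. box c d \<subseteq> box a b \<longrightarrow>
      (LINT t:box c d|lborel. Feval F kern \<alpha> \<beta> a b p1 q1 p2 q2 u t) =
      (LINT t:box c d|lborel. Feval F kern \<alpha> \<beta> a b p1 q1 p2 q2 (\<lambda>s. u s + \<epsilon> *\<^sub>R g s + r \<epsilon> s) t))"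
    using invariant by blast
  have "\<forall>\<^sub>F \<epsilon> in at 0. F t (u t + \<epsilon> *\<^sub>R g t + r \<epsilon> t)
      (gradB kern \<alpha> a b p1 q1 u t + \<epsilon> *\<^sub>R gradB kern \<alpha> a b p1 q1 g t + gradB kern \<alpha> a b p1 q1 (r \<epsilon>) t)
      (gradK kern \<beta> a b p2 q2 u t + \<epsilon> *\<^sub>R gradK kern \<beta> a b p2 q2 g t + gradK kern \<beta> a b p2 q2 (r \<epsilon>) t)
      = Feval F kern \<alpha> \<beta> a b p1 q1 p2 q2 u t"
    unfolding eventually_at using \<open>\<delta> > 0\<close>
    by (auto intro!: exI[of _ \<delta>] invariance_pointwise[OF ab kB kK F u g r[rule_format] _ t]
        inv_\<delta>[rule_format])
  then show "\<forall>\<^sub>F \<epsilon> in at 0.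
      (\<lambda>(t, x, v, w). F t x v w) ((t, u t, gradB kern \<alpha> a b p1 q1 u t, gradK kern \<beta> a b p2 q2 u t)
        + \<epsilon> *\<^sub>R (0, g t, gradB kern \<alpha> a b p1 q1 g t, gradK kern \<beta> a b p2 q2 g t)
        + (0, r \<epsilon> t, gradB kern \<alpha> a b p1 q1 (r \<epsilon>) t, gradK kern \<beta> a b p2 q2 (r \<epsilon>) t))
      = (\<lambda>(t, x, v, w). F t x v w) (t, u t, gradB kern \<alpha> a b p1 q1 u t, gradK kern \<beta> a b p2 q2 u t)"
    by (simp add: Feval_def)
qed

theorem mainTheorem7:
  fixes kern :: "real \<Rightarrow> real \<Rightarrow> real"
    and a b \<alpha> \<beta> p1 q1 p2 q2 :: "real^'n"
    and F :: "real^'n \<Rightarrow> real^'m \<Rightarrow> real^'n^'m \<Rightarrow> real^'n^'m \<Rightarrow> real"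
    and u \<psi> :: "real^'n \<Rightarrow> real^'m"
    and \<xi> :: "real^'n \<Rightarrow> real^'m \<Rightarrow> real^'m"
    and r :: "real \<Rightarrow> real^'n \<Rightarrow> real^'m"
  assumes ab: "\<forall>i. a $ i < b $ i"
    and \<alpha>01: "\<forall>i. 0 < \<alpha> $ i \<and> \<alpha> $ i < 1"
    and \<beta>01: "\<forall>i. 0 < \<beta> $ i \<and> \<beta> $ i < 1"
    and kern_L1: "\<forall>i. set_integrable lborel {0<..<b $ i - a $ i} (kern (1 - \<alpha> $ i))
                    \<and> set_integrable lborel {0<..<b $ i - a $ i} (kern (\<beta> $ i))"
    and F_C2: "C2_on (cbox a b \<times> UNIV \<times> UNIV \<times> UNIV) (\<lambda>(t, x, v, w). F t x v w)"
    and u_reg: "regular_fn kern \<alpha> \<beta> a b p1 q1 p2 q2 u"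
    and u_bd: "\<forall>t \<in> cbox a b - box a b. u t = \<psi> t"
    \<comment> \<open>regularity hypotheses (R)\<close>
    and R1: "\<forall>i k. C1_box a b (Kop kern (1 - \<alpha> $ i) a b (q1 $ i) (p1 $ i) i
                   (Feval (dFv F k i) kern \<alpha> \<beta> a b p1 q1 p2 q2 u))"
    and R2: "\<forall>i k. continuous_on (cbox a b) (Kop kern (\<beta> $ i) a b (q2 $ i) (p2 $ i) i
                   (Feval (dFw F k i) kern \<alpha> \<beta> a b p1 q1 p2 q2 u))"
    and EL: "\<forall>k. \<forall>t \<in> box a b.
       (\<Sum>i\<in>UNIV. - Aop kern (\<alpha> $ i) a b (q1 $ i) (p1 $ i) i
                       (Feval (dFv F k i) kern \<alpha> \<beta> a b p1 q1 p2 q2 u) t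
                   + Kop kern (\<beta> $ i) a b (q2 $ i) (p2 $ i) i
                       (Feval (dFw F k i) kern \<alpha> \<beta> a b p1 q1 p2 q2 u) t)
       + Feval (dFx F k) kern \<alpha> \<beta> a b p1 q1 p2 q2 u t = 0"
    and \<xi>_C1: "C1_on (cbox a b \<times> UNIV) (\<lambda>(t, x). \<xi> t x)"
    and \<xi>hat_reg: "regular_fn kern \<alpha> \<beta> a b p1 q1 p2 q2 (\<lambda>t. \<xi> t (u t))"
    and r_reg: "\<forall>\<epsilon>. regular_fn kern \<alpha> \<beta> a b p1 q1 p2 q2 (r \<epsilon>)"
    and r_small: "\<forall>t \<in> cbox a b. ((\<lambda>\<epsilon>. norm (r \<epsilon> t) / \<bar>\<epsilon>\<bar>) \<longlongrightarrow> 0) (at 0)"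
    and rB_small: "\<forall>t \<in> cbox a b. \<forall>i k.
       ((\<lambda>\<epsilon>. Bop kern (\<alpha> $ i) a b (p1 $ i) (q1 $ i) i (\<lambda>s. r \<epsilon> s $ k) t / \<epsilon>) \<longlongrightarrow> 0) (at 0)"
    and rK_small: "\<forall>t \<in> cbox a b. \<forall>i k.
       ((\<lambda>\<epsilon>. Kop kern (\<beta> $ i) a b (p2 $ i) (q2 $ i) i (\<lambda>s. r \<epsilon> s $ k) t / \<epsilon>) \<longlongrightarrow> 0) (at 0)"
    and invariant: "\<exists>\<delta>>0. \<forall>\<epsilon>. \<bar>\<epsilon>\<bar> < \<delta> \<longrightarrow> (\<forall>c d. box c d \<subseteq> box a b \<longrightarrow>
       (LINT t:box c d|lborel. Feval F kern \<alpha> \<beta> a b p1 q1 p2 q2 u t) =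
       (LINT t:box c d|lborel. Feval F kern \<alpha> \<beta> a b p1 q1 p2 q2
                                   (\<lambda>s. u s + \<epsilon> *\<^sub>R \<xi> s (u s) + r \<epsilon> s) t))"
  shows "\<forall>t \<in> box a b.
    (\<Sum>k\<in>UNIV. \<Sum>i\<in>UNIV.
        Dop kern (\<alpha> $ i) a b (p1 $ i) (q1 $ i) i (\<lambda>s. \<xi> s (u s) $ k)
            (Feval (dFv F k i) kern \<alpha> \<beta> a b p1 q1 p2 q2 u) t
      + Iop kern (\<beta> $ i) a b (p2 $ i) (q2 $ i) i (\<lambda>s. \<xi> s (u s) $ k)
            (Feval (dFw F k i) kern \<alpha> \<beta> a b p1 q1 p2 q2 u) t) = 0"
proof (intro ballI)
  fix t assume t: "t \<in> box a b"
  let ?\<xi> = "\<lambda>s. \<xi> s (u s)"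
  let ?z = "(t, u t, gradB kern \<alpha> a b p1 q1 u t, gradK kern \<beta> a b p2 q2 u t)"
  have "?z \<in> interior (cbox a b \<times> UNIV \<times> UNIV \<times> UNIV)"
    using t by (simp add: interior_Times)
  with F_C2 obtain L where L: "((\<lambda>(t, x, v, w). F t x v w) has_derivative L) (at ?z)"
    by (rule C2_on_has_derivative_interior)
  have "t \<in> cbox a b" using t box_subset_cbox by blast
  then have "L (0, ?\<xi> t, gradB kern \<alpha> a b p1 q1 ?\<xi> t, gradK kern \<beta> a b p2 q2 ?\<xi> t) = 0"
    using kern_L1 r_small rB_small rK_small
    by (intro first_variation_zero[OF ab _ _ C2_on_continuous_on[OF F_C2] u_reg \<xi>hat_reg r_reg
          _ _ _ invariant t L]) auto
  then have "(\<Sum>k\<in>UNIV. ?\<xi> t $ k * Feval (dFx F k) kern \<alpha> \<beta> a b p1 q1 p2 q2 u t)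
      + (\<Sum>k\<in>UNIV. \<Sum>i\<in>UNIV. Bop kern (\<alpha> $ i) a b (p1 $ i) (q1 $ i) i (\<lambda>s. ?\<xi> s $ k) t
              * Feval (dFv F k i) kern \<alpha> \<beta> a b p1 q1 p2 q2 u t)
      + (\<Sum>k\<in>UNIV. \<Sum>i\<in>UNIV. Kop kern (\<beta> $ i) a b (p2 $ i) (q2 $ i) i (\<lambda>s. ?\<xi> s $ k) t
              * Feval (dFw F k i) kern \<alpha> \<beta> a b p1 q1 p2 q2 u t) = 0"
    by (simp add: Lagrangian_derivative_expansion[OF L] Feval_def gradB_def gradK_def)
  with EL t show "(\<Sum>k\<in>UNIV. \<Sum>i\<in>UNIV.
        Dop kern (\<alpha> $ i) a b (p1 $ i) (q1 $ i) i (\<lambda>s. \<xi> s (u s) $ k)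
            (Feval (dFv F k i) kern \<alpha> \<beta> a b p1 q1 p2 q2 u) t
      + Iop kern (\<beta> $ i) a b (p2 $ i) (q2 $ i) i (\<lambda>s. \<xi> s (u s) $ k)
            (Feval (dFw F k i) kern \<alpha> \<beta> a b p1 q1 p2 q2 u) t) = 0"
    unfolding Dop_def Iop_def by (intro euler_lagrange_substitution) auto
qed

end
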